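(* Let $N\ge3$ and let $\mathcal{H}$ be an undirected hypergraph on $\{1,\dots,N\}$. Consider any network dynamical system on $\mathcal{H}$ with one-dimensional node states, smooth $F$ and coupling homogeneous in each order. Then the system does not realize the Field cycle: there do not exist distinct $i,j\in\{1,\dots,N\}$ such that $\Delta$, $S_i$, $S_j$ are dynamically invariant, together with two distinct hyperbolic equilibria $\xi_1,\xi_2\in\Delta$, a heteroclinic trajectory from $\xi_1$ to $\xi_2$ contained in $S_i\setminus\Delta$ and a heteroclinic trajectory from $\xi_2$ to $\xi_1$ contained in $S_j\setminus\Delta$.
   Context: An undirected hypergraph on $\{1,\dots,N\}$ is a set $\mathcal E$ of nonempty subsets $A\subseteq\{1,\dots,N\}$ (undirected hyperedges, identified with directed hyperedges $(A,A)$); the order of $A$ is $|A|+1$. A network dynamical system with coupling homogeneous in each order on it is $\dot x_k = F(x_k) + \sum_{A\in\mathcal{E}:\,k\in A} G^{(|A|+1)}(x_k; x_A)$ on $\mathbb{R}^N$, where $x_A$ is the vector of $x_j$, $j\in A$ (including $x_k$), $F$ is smooth, and $G^{(m)}:\mathbb{R}\times\mathbb{R}^{m-1}\to\mathbb{R}$ is smooth, symmetric in its last $m-1$ arguments and depends nontrivially on them. $\Delta=\{x_1=\dots=x_N\}$ and $S_j=\{x: x_l=x_k \text{ for all } k,l\neq j\}$. A heteroclinic trajectory from $\xi$ to $\xi'$ is a solution $x(t)$, $t\in\mathbb R$, with $x(t)\to\xi$ as $t\to-\infty$ and $x(t)\to\xi'$ as $t\to+\infty$; an equilibrium is hyperbolic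 if its Jacobian has no eigenvalue with zero real part. *)

theory Defs
  imports "HOL-Analysis.Analysis"
begin

text \<open>Node set {1..N} is modelled by a finite (linearly ordered) type 'n with CARD('n) = N;
  states are x :: real^'n.\<close>

text \<open>Smoothness (C-infinity) of a real function of finitely many real variables,
  given as g :: (nat => real) => real depending only on the coordinates < k:
  g is continuous and every partial derivative exists everywhere and is again smooth.\<close>
definition depends_only_on :: "nat \<Rightarrow> ((nat \<Rightarrow> real) \<Rightarrow> real) \<Rightarrow> bool" where
  "depends_only_on k g \<longleftrightarrow> (\<forall>z w. (\<forall>l<k. z l = w l) \<longrightarrow> g z = g w)"

coinductive smooth_in :: "nat \<Rightarrow> ((nat \<Rightarrow> real) \<Rightarrow> real) \<Rightarrow> bool" for k :: nat where
  "depends_only_on k g \<Longrightarrow> continuous_on UNIV g \<Longrightarrow>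
   (\<forall>i<k. \<exists>dg. (\<forall>z. ((\<lambda>s. g (z(i := s))) has_real_derivative dg z) (at (z i))) \<and> smooth_in k dg)
   \<Longrightarrow> smooth_in k g"

definition smooth_real_fun :: "(real \<Rightarrow> real) \<Rightarrow> bool" where
  "smooth_real_fun F \<longleftrightarrow> smooth_in 1 (\<lambda>z. F (z 0))"

text \<open>An admissible order-m coupling function G^(m) : R x R^(m-1) -> R, encoded as a function
  of (z 0, z 1, ..., z (m-1)) with z 0 = x_k and z 1..z (m-1) = x_A:
  smooth, symmetric in the last m-1 arguments, depending nontrivially on them.\<close>
definition admissible_coupling :: "nat \<Rightarrow> ((nat \<Rightarrow> real) \<Rightarrow> real) \<Rightarrow> bool" where
  "admissible_coupling m g \<longleftrightarrow>
     smooth_in m g \<and>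
     (\<forall>p z. p permutes {1..<m} \<longrightarrow> g (z \<circ> p) = g z) \<and>
     (\<exists>z w. z 0 = w 0 \<and> g z \<noteq> g w)"

text \<open>Argument (x_k; x_A) of the coupling function for node k and hyperedge A,
  x_A listed in increasing order of the indices (irrelevant by symmetry).\<close>
definition coupling_arg :: "real^'n::{finite,linorder} \<Rightarrow> 'n \<Rightarrow> 'n set \<Rightarrow> nat \<Rightarrow> real" where
  "coupling_arg x k A = (\<lambda>l. if l = 0 then x $ k
      else if l \<le> card A then x $ (sorted_list_of_set A ! (l - 1)) else 0)"

definition network_field ::
  "('n::{finite,linorder}) set set \<Rightarrow> (real \<Rightarrow> real) \<Rightarrow> (nat \<Rightarrow> (nat \<Rightarrow> real) \<Rightarrow> real)
     \<Rightarrow> real^('n::{finite,linorder}) \<Rightarrow> real^('n::{finite,linorder})" where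
  "network_field E F G x =
     (\<chi> k. F (x $ k) + (\<Sum>A\<in>{A\<in>E. k \<in> A}. G (card A + 1) (coupling_arg x k A)))"

definition diag :: "(real^'n) set" where
  "diag = {x. \<forall>k l. x $ k = x $ l}"

definition S_set :: "'n \<Rightarrow> (real^'n) set" where
  "S_set j = {x. \<forall>k l. k \<noteq> j \<and> l \<noteq> j \<longrightarrow> x $ l = x $ k}"

definition dyn_invariant :: "(real^'n \<Rightarrow> real^'n) \<Rightarrow> (real^'n) set \<Rightarrow> bool" where
  "dyn_invariant f X \<longleftrightarrow>
     (\<forall>x J t0. is_interval J \<and> t0 \<in> J \<and>
        (\<forall>t\<in>J. (x has_vector_derivative f (x t)) (at t within J)) \<and> x t0 \<in> X
        \<longrightarrow> (\<forall>t\<in>J. x t \<in> X))"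

definition complexify :: "real^'n^'n \<Rightarrow> complex^'n^'n" where
  "complexify M = (\<chi> i j. complex_of_real (M $ i $ j))"

definition is_eigenvalue :: "complex^'n^'n \<Rightarrow> complex \<Rightarrow> bool" where
  "is_eigenvalue M c \<longleftrightarrow> (\<exists>v. v \<noteq> 0 \<and> M *v v = c *s v)"

definition hyperbolic_equilibrium :: "(real^'n \<Rightarrow> real^'n) \<Rightarrow> real^'n \<Rightarrow> bool" where
  "hyperbolic_equilibrium f \<xi> \<longleftrightarrow> f \<xi> = 0 \<and>
     (\<exists>L. (f has_derivative L) (at \<xi>) \<and>
        (\<forall>c. is_eigenvalue (complexify (matrix L)) c \<longrightarrow> Re c \<noteq> 0))"

definition heteroclinic :: "(real^'n \<Rightarrow> real^'n) \<Rightarrow> real^'n \<Rightarrow> real^'n \<Rightarrow> (real \<Rightarrow> real^'n) \<Rightarrow> bool" where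
  "heteroclinic f \<xi> \<xi>' x \<longleftrightarrow>
     (\<forall>t. (x has_vector_derivative f (x t)) (at t)) \<and>
     (x \<longlongrightarrow> \<xi>) at_bot \<and> (x \<longlongrightarrow> \<xi>') at_top"

definition realizes_field_cycle :: "(real^'n \<Rightarrow> real^'n) \<Rightarrow> bool" where
  "realizes_field_cycle f \<longleftrightarrow>
     (\<exists>i j. i \<noteq> j \<and> dyn_invariant f diag \<and> dyn_invariant f (S_set i) \<and> dyn_invariant f (S_set j) \<and>
       (\<exists>\<xi>1 \<xi>2. \<xi>1 \<in> diag \<and> \<xi>2 \<in> diag \<and> \<xi>1 \<noteq> \<xi>2 \<and>
          hyperbolic_equilibrium f \<xi>1 \<and> hyperbolic_equilibrium f \<xi>2 \<and>
          (\<exists>x. heteroclinic f \<xi>1 \<xi>2 x \<and> (\<forall>t. x t \<in> S_set i - diag)) \<and>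
          (\<exists>y. heteroclinic f \<xi>2 \<xi>1 y \<and> (\<forall>t. y t \<in> S_set j - diag))))"

end

theory Submission
  imports Defs
begin

text \<open>At an equilibrium \<open>\<xi>\<close> on the diagonal let \<open>J\<close> be the Jacobian of the network field.
  Undirected hyperedges and symmetric couplings make \<open>J\<close> symmetric off the diagonal, invariance of
  \<open>\<Delta>\<close> gives it a constant row sum, and invariance of \<open>S_i\<close> and \<open>S_j\<close> makes columns \<open>i\<close> and \<open>j\<close>
  constant off the diagonal. Together these force the transverse eigenvalues \<open>J_ii - J_mi\<close> and
  \<open>J_jj - J_mj\<close> (for a third node \<open>m\<close>) to coincide. Along a trajectory in \<open>S_i - \<Delta>\<close> leaving \<open>\<xi>\<close>,
  the difference \<open>x_i - x_m\<close> decays backwards in time at the first rate, which must therefore be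
  \<open>\<ge> 0\<close>; along a trajectory in \<open>S_j - \<Delta>\<close> arriving at \<open>\<xi>\<close> the second rate must be \<open>\<le> 0\<close>. So
  both vanish, column \<open>i\<close> of \<open>J\<close> becomes a multiple of \<open>(1, \<dots>, 1)\<close>, which is itself an
  eigenvector, and \<open>J\<close> is singular, contradicting hyperbolicity.

  Invariance yields tangency conditions through local solutions obtained by Picard iteration;
  the rates are read off through strict partial derivatives of the field, which exist because
  the couplings have continuous partial derivatives.\<close>

section \<open>Local solutions and invariant sets\<close>

lemma integral_continuous_on_Icc:
  fixes h :: "real \<Rightarrow> 'a::banach"
  assumes "continuous_on {a..b} h"
  shows "continuous_on {a..b} (\<lambda>t. integral {a..t} h)"
  using integral_has_vector_derivative[OF assms] has_vector_derivative_continuous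
    continuous_on_eq_continuous_within by blast

locale picard_iteration =
  fixes f :: "'a::banach \<Rightarrow> 'a" and p :: 'a and r K :: real
  assumes radius_pos: "r > 0" and lipschitz: "K-lipschitz_on (cball p r) f"
begin

definition bound :: real where "bound = norm (f p) + K * r + 1"

text \<open>\<open>time * bound \<le> r\<close> keeps the iterates in the ball, \<open>time * K \<le> 1/2\<close> makes the Picard map
  a contraction.\<close>
definition time :: real where "time = min (r / bound) (1 / (2 * K + 1))"

primrec iterate :: "nat \<Rightarrow> real \<Rightarrow> 'a" where
  "iterate 0 t = p"
| "iterate (Suc n) t = p + integral {0..t} (\<lambda>s. f (iterate n s))"

lemma K_nonneg: "K \<ge> 0"
  using lipschitz_on_nonneg[OF lipschitz] .

lemma bound_pos: "bound > 0"
  using K_nonneg radius_pos by (simp add: bound_def add_nonneg_pos)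

lemma time_pos: "time > 0"
  using bound_pos radius_pos K_nonneg by (simp add: time_def)

lemma time_bound_le: "time * bound \<le> r"
  using bound_pos by (simp add: time_def min_def field_simps)

lemma time_K_le: "time * K \<le> 1/2"
proof -
  have "time \<le> 1 / (2 * K + 1)" by (simp add: time_def)
  hence "time * K \<le> K / (2 * K + 1)" using K_nonneg by (metis mult_right_mono times_divide_eq_left mult_1)
  also have "\<dots> \<le> 1/2" using K_nonneg by (simp add: field_simps)
  finally show ?thesis .
qed

lemma norm_f_le_bound:
  assumes "x \<in> cball p r" shows "norm (f x) \<le> bound"
proof -
  have "norm (f x) \<le> norm (f p) + norm (f x - f p)" by (metis add.commute norm_triangle_sub)
  also have "\<dots> \<le> norm (f p) + K * norm (x - p)"
    using lipschitz_on_normD[OF lipschitz assms] radius_pos by simp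
  also have "\<dots> \<le> norm (f p) + K * r"
    using assms K_nonneg by (simp add: dist_norm norm_minus_commute mult_left_mono)
  finally show ?thesis by (simp add: bound_def)
qed

lemma continuous_on_f_comp:
  assumes "continuous_on {0..time} g" "\<And>t. t \<in> {0..time} \<Longrightarrow> g t \<in> cball p r"
  shows "continuous_on {0..time} (\<lambda>s. f (g s))"
  by (rule continuous_on_compose2[OF lipschitz_on_continuous_on[OF lipschitz] assms(1)]) (use assms(2) in auto)

lemma norm_integral_le:
  fixes h :: "real \<Rightarrow> 'a"
  assumes "continuous_on {0..time} h" "t \<in> {0..time}" "\<And>s. s \<in> {0..time} \<Longrightarrow> norm (h s) \<le> B"
  shows "norm (integral {0..t} h) \<le> B * t"
proof -
  have "continuous_on {0..t} h" using assms(1,2) continuous_on_subset by fastforce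
  from integral_bound[OF _ this, of B] assms show ?thesis by auto
qed

lemma iterate_continuous_in_ball:
  "continuous_on {0..time} (iterate n) \<and> (\<forall>t\<in>{0..time}. iterate n t \<in> cball p r)"
proof (induction n)
  case 0 thus ?case using radius_pos by simp
next
  case (Suc n)
  hence cont: "continuous_on {0..time} (\<lambda>s. f (iterate n s))" by (blast intro: continuous_on_f_comp)
  have "iterate (Suc n) t \<in> cball p r" if t: "t \<in> {0..time}" for t
  proof -
    have "norm (integral {0..t} (\<lambda>s. f (iterate n s))) \<le> bound * t"
      using norm_integral_le[OF cont t] norm_f_le_bound Suc by blast
    also have "\<dots> \<le> bound * time" using t bound_pos by auto
    finally show ?thesis using time_bound_le by (simp add: dist_norm mult.commute)
  qed
  moreover have "continuous_on {0..time} (iterate (Suc n))"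
    using integral_continuous_on_Icc[OF cont] by (auto intro: continuous_intros)
  ultimately show ?case by blast
qed

lemma iterate_step_le:
  "\<forall>t\<in>{0..time}. norm (iterate (Suc n) t - iterate n t) \<le> r / 2 ^ n"
proof (induction n)
  case 0 thus ?case using iterate_continuous_in_ball[of 1] by (simp add: dist_norm norm_minus_commute)
next
  case (Suc n)
  show ?case
  proof
    fix t assume t: "t \<in> {0..time}"
    have c1: "continuous_on {0..time} (\<lambda>s. f (iterate (Suc n) s))"
      and c0: "continuous_on {0..time} (\<lambda>s. f (iterate n s))"
      using continuous_on_f_comp iterate_continuous_in_ball by blast+
    have sub: "{0..t} \<subseteq> {0..time}" using t by auto
    have "iterate (Suc (Suc n)) t - iterate (Suc n) t =
        integral {0..t} (\<lambda>s. f (iterate (Suc n) s) - f (iterate n s))"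
      using integral_diff[OF integrable_continuous_real[OF continuous_on_subset[OF c1 sub]]
          integrable_continuous_real[OF continuous_on_subset[OF c0 sub]]] by simp
    also have "norm \<dots> \<le> (K * (r / 2 ^ n)) * t"
    proof (rule norm_integral_le[OF _ t])
      show "continuous_on {0..time} (\<lambda>s. f (iterate (Suc n) s) - f (iterate n s))"
        using c0 c1 by (intro continuous_intros)
      fix s assume s: "s \<in> {0..time}"
      have "norm (f (iterate (Suc n) s) - f (iterate n s)) \<le> K * norm (iterate (Suc n) s - iterate n s)"
        using lipschitz_on_normD[OF lipschitz] iterate_continuous_in_ball s by blast
      also have "\<dots> \<le> K * (r / 2 ^ n)" using Suc s K_nonneg by (intro mult_left_mono) auto
      finally show "norm (f (iterate (Suc n) s) - f (iterate n s)) \<le> K * (r / 2 ^ n)" .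
    qed
    also have "\<dots> \<le> (K * (r / 2 ^ n)) * time"
      using t K_nonneg radius_pos by (intro mult_left_mono) auto
    also have "\<dots> = (time * K) * (r / 2 ^ n)" by simp
    also have "\<dots> \<le> (1/2) * (r / 2 ^ n)" using time_K_le radius_pos by (intro mult_right_mono) auto
    finally show "norm (iterate (Suc (Suc n)) t - iterate (Suc n) t) \<le> r / 2 ^ Suc n" by simp
  qed
qed

definition solution :: "real \<Rightarrow> 'a" where
  "solution t = p + (\<Sum>n. iterate (Suc n) t - iterate n t)"

lemma iterate_uniform_limit: "uniform_limit {0..time} iterate solution sequentially"
proof -
  have "summable (\<lambda>n. r * (1/2::real) ^ n)" by (intro summable_mult summable_geometric) simp
  hence "summable (\<lambda>n. r / 2 ^ n)" by (simp add: power_one_over)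
  hence "uniform_limit {0..time} (\<lambda>n t. \<Sum>i<n. iterate (Suc i) t - iterate i t)
      (\<lambda>t. \<Sum>i. iterate (Suc i) t - iterate i t) sequentially"
    by (rule Weierstrass_m_test[rotated]) (use iterate_step_le in blast)
  hence "uniform_limit {0..time} (\<lambda>n t. p + (\<Sum>i<n. iterate (Suc i) t - iterate i t)) solution sequentially"
    unfolding uniform_limit_iff solution_def by (simp add: dist_norm)
  moreover have "p + (\<Sum>i<n. iterate (Suc i) t - iterate i t) = iterate n t" for n t
    using sum_lessThan_telescope[of "\<lambda>i. iterate i t" n] by simp
  ultimately show ?thesis by simp
qed

lemma solution_continuous: "continuous_on {0..time} solution"
  by (rule uniform_limit_theorem[OF _ iterate_uniform_limit]) (use iterate_continuous_in_ball in auto)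

lemma iterate_tendsto_solution: "t \<in> {0..time} \<Longrightarrow> (\<lambda>n. iterate n t) \<longlonglongrightarrow> solution t"
  by (rule tendsto_uniform_limitI[OF iterate_uniform_limit])

lemma solution_in_ball: "t \<in> {0..time} \<Longrightarrow> solution t \<in> cball p r"
  by (rule Lim_in_closed_set[OF closed_cball _ _ iterate_tendsto_solution])
    (use iterate_continuous_in_ball in auto)

lemma f_iterate_uniform_limit:
  "uniform_limit {0..time} (\<lambda>n s. f (iterate n s)) (\<lambda>s. f (solution s)) sequentially"
proof (rule uniform_limitI)
  fix e :: real assume e: "e > 0"
  have "\<forall>\<^sub>F n in sequentially. \<forall>s\<in>{0..time}. dist (iterate n s) (solution s) < e / (K + 1)"
    using uniform_limitD[OF iterate_uniform_limit] e K_nonneg by simp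
  thus "\<forall>\<^sub>F n in sequentially. \<forall>s\<in>{0..time}. dist (f (iterate n s)) (f (solution s)) < e"
  proof eventually_elim
    case (elim n)
    show ?case
    proof
      fix s assume s: "s \<in> {0..time}"
      have "dist (f (iterate n s)) (f (solution s)) \<le> K * dist (iterate n s) (solution s)"
        using lipschitz_onD[OF lipschitz] iterate_continuous_in_ball solution_in_ball s by blast
      also have "\<dots> \<le> K * (e / (K + 1))"
        using elim s K_nonneg by (intro mult_left_mono) (auto intro: less_imp_le)
      also have "\<dots> < e" using K_nonneg e by (simp add: field_simps)
      finally show "dist (f (iterate n s)) (f (solution s)) < e" .
    qed
  qed
qed

lemma solution_integral_eq:
  assumes t: "t \<in> {0..time}"
  shows "solution t = p + integral {0..t} (\<lambda>s. f (solution s))"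
proof -
  have sub: "{0..t} \<subseteq> {0..time}" using t by auto
  obtain I J where I: "\<And>n. ((\<lambda>s. f (iterate n s)) has_integral I n) {0..t}"
    and J: "((\<lambda>s. f (solution s)) has_integral J) {0..t}" and IJ: "I \<longlonglongrightarrow> J"
    by (rule uniform_limit_integral[OF uniform_limit_on_subset[OF f_iterate_uniform_limit sub]])
      (use continuous_on_subset[OF continuous_on_f_comp sub] iterate_continuous_in_ball in auto)
  have "integral {0..t} (\<lambda>s. f (iterate n s)) = I n" for n
    using I by (rule integral_unique)
  hence "(\<lambda>n. iterate (Suc n) t) \<longlonglongrightarrow> p + J"
    using tendsto_add[OF tendsto_const IJ, of p] by simp
  moreover have "(\<lambda>n. iterate (Suc n) t) \<longlonglongrightarrow> solution t"
    using LIMSEQ_Suc[OF iterate_tendsto_solution[OF t]] .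
  ultimately show ?thesis using J LIMSEQ_unique by (simp add: integral_unique) blast
qed

lemma solution_has_vector_derivative:
  assumes t: "t \<in> {0..time}"
  shows "(solution has_vector_derivative f (solution t)) (at t within {0..time})"
proof -
  have "continuous_on {0..time} (\<lambda>s. f (solution s))"
    using continuous_on_f_comp solution_continuous solution_in_ball by blast
  hence "((\<lambda>u. p + integral {0..u} (\<lambda>s. f (solution s))) has_vector_derivative f (solution t))
      (at t within {0..time})"
    using integral_has_vector_derivative[OF _ t] by (auto intro!: derivative_eq_intros)
  thus ?thesis
    by (rule has_vector_derivative_transform[OF t, rotated]) (use solution_integral_eq in auto)
qed

end

lemma local_existence:
  fixes f :: "'a::banach \<Rightarrow> 'a"
  assumes "r > 0" and "K-lipschitz_on (cball p r) f"
  shows "\<exists>\<delta>>0. \<exists>\<phi>. \<phi> 0 = p \<and>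
    (\<forall>t\<in>{0..\<delta>}. (\<phi> has_vector_derivative f (\<phi> t)) (at t within {0..\<delta>}))"
proof -
  interpret picard_iteration f p r K using assms by unfold_locales
  have "solution 0 = p" using solution_integral_eq[of 0] time_pos by simp
  thus ?thesis using time_pos solution_has_vector_derivative by blast
qed

lemma invariant_set_tangent:
  fixes f :: "real^'n \<Rightarrow> real^'n"
  assumes inv: "dyn_invariant f X" and p: "p \<in> X" and sub: "X \<subseteq> {x. x $ k = x $ l}"
    and r: "r > 0" and lip: "K-lipschitz_on (cball p r) f"
  shows "f p $ k = f p $ l"
proof -
  obtain \<delta> \<phi> where \<delta>: "\<delta> > 0" and \<phi>0: "\<phi> 0 = p"
    and der: "\<forall>t\<in>{0..\<delta>}. (\<phi> has_vector_derivative f (\<phi> t)) (at t within {0..\<delta>})"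
    using local_existence[OF r lip] by blast
  have "\<forall>t\<in>{0..\<delta>}. \<phi> t \<in> X"
    using inv unfolding dyn_invariant_def
    by (elim allE[of _ \<phi>] allE[of _ "{0..\<delta>}"] allE[of _ 0]) (use \<delta> der \<phi>0 p is_interval_cc in auto)
  hence eq: "\<phi> t $ k - \<phi> t $ l = 0" if "t \<in> {0..\<delta>}" for t using sub that by auto
  have d1: "((\<lambda>t. \<phi> t $ k - \<phi> t $ l) has_vector_derivative (f p $ k - f p $ l)) (at 0 within {0..\<delta>})"
    using der \<delta> \<phi>0
    by (auto intro!: has_vector_derivative_diff bounded_linear.has_vector_derivative[OF bounded_linear_vec_nth])
  have d0: "((\<lambda>t. \<phi> t $ k - \<phi> t $ l) has_vector_derivative 0) (at 0 within {0..\<delta>})"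
    by (rule has_vector_derivative_transform[OF _ eq]) (use \<delta> in \<open>auto intro: derivative_eq_intros\<close>)
  have "f p $ k - f p $ l = 0"
    using vector_derivative_unique_within_closed_interval[of 0 \<delta> 0, unfolded cbox_interval, OF _ _ d1 d0] \<delta>
    by simp
  thus ?thesis by simp
qed

section \<open>Strict difference quotients\<close>

lemma tendsto_fun_componentwise:
  fixes f :: "'a \<Rightarrow> 'b \<Rightarrow> 'c::topological_space"
  shows "(f \<longlongrightarrow> l) F \<longleftrightarrow> (\<forall>i. ((\<lambda>x. f x i) \<longlongrightarrow> l i) F)"
  using limitin_componentwise[of "\<lambda>i. euclidean" UNIV f l F]
  by (simp add: euclidean_product_topology)

lemma mean_value_along_coordinate:
  fixes g dg :: "(nat \<Rightarrow> real) \<Rightarrow> real"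
  assumes deriv: "\<And>z. ((\<lambda>s. g (z(q := s))) has_real_derivative dg z) (at (z q))"
  shows "\<exists>\<theta>. \<bar>\<theta> - z q\<bar> \<le> \<bar>w\<bar> \<and> g (z(q := z q + w)) - g z = w * dg (z(q := \<theta>))"
proof -
  define h where "h s = g (z(q := s))" for s
  have h: "DERIV h s :> dg (z(q := s))" for s
    using deriv[of "z(q := s)"] unfolding h_def[abs_def] by simp
  have gz: "g z = h (z q)" and gw: "g (z(q := z q + w)) = h (z q + w)" by (simp_all add: h_def)
  consider "w = 0" | "w > 0" | "w < 0" by linarith
  thus ?thesis
  proof cases
    case 1 thus ?thesis by (intro exI[of _ "z q"]) simp
  next
    case 2
    then obtain \<theta> where "z q < \<theta>" "\<theta> < z q + w" "h (z q + w) - h (z q) = w * dg (z(q := \<theta>))"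
      using MVT2[of "z q" "z q + w" h "\<lambda>s. dg (z(q := s))"] h by auto
    thus ?thesis using 2 by (intro exI[of _ \<theta>]) (simp add: gz gw)
  next
    case 3
    then obtain \<theta> where "z q + w < \<theta>" "\<theta> < z q" "h (z q) - h (z q + w) = (- w) * dg (z(q := \<theta>))"
      using MVT2[of "z q + w" "z q" h "\<lambda>s. dg (z(q := s))"] h by auto
    thus ?thesis using 3 unfolding gz gw by (intro exI[of _ \<theta>]) (auto simp: algebra_simps)
  qed
qed

lemma partial_difference_quotient_tendsto:
  fixes g dg :: "(nat \<Rightarrow> real) \<Rightarrow> real" and Z :: "'x \<Rightarrow> nat \<Rightarrow> real"
  assumes deriv: "\<And>z. ((\<lambda>s. g (z(q := s))) has_real_derivative dg z) (at (z q))"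
    and cont: "continuous_on UNIV dg"
    and Z: "(Z \<longlongrightarrow> Z0) F" and w: "(w \<longlongrightarrow> 0) F" and w0: "eventually (\<lambda>x. w x \<noteq> 0) F"
  shows "((\<lambda>x. (g ((Z x)(q := Z x q + w x)) - g (Z x)) / w x) \<longlongrightarrow> dg Z0) F"
proof -
  have "\<forall>x. \<exists>\<theta>. \<bar>\<theta> - Z x q\<bar> \<le> \<bar>w x\<bar> \<and>
      g ((Z x)(q := Z x q + w x)) - g (Z x) = w x * dg ((Z x)(q := \<theta>))"
    using mean_value_along_coordinate[OF deriv] by blast
  then obtain \<theta> where \<theta>_near: "\<And>x. \<bar>\<theta> x - Z x q\<bar> \<le> \<bar>w x\<bar>"
    and \<theta>_mvt: "\<And>x. g ((Z x)(q := Z x q + w x)) - g (Z x) = w x * dg ((Z x)(q := \<theta> x))"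
    by metis
  have "((\<lambda>x. \<theta> x - Z x q) \<longlongrightarrow> 0) F"
    by (rule tendsto_0_le[OF w, of _ 1]) (use \<theta>_near in simp)
  moreover have "((\<lambda>x. Z x q) \<longlongrightarrow> Z0 q) F" using Z[unfolded tendsto_fun_componentwise] ..
  ultimately have "((\<lambda>x. (\<theta> x - Z x q) + Z x q) \<longlongrightarrow> 0 + Z0 q) F" by (rule tendsto_add)
  hence "(\<theta> \<longlongrightarrow> Z0 q) F" by simp
  hence "((\<lambda>x. ((Z x)(q := \<theta> x)) i) \<longlongrightarrow> Z0 i) F" for i
    using Z[unfolded tendsto_fun_componentwise] by (cases "i = q") simp_all
  hence "((\<lambda>x. (Z x)(q := \<theta> x)) \<longlongrightarrow> Z0) F"
    unfolding tendsto_fun_componentwise ..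
  hence "((\<lambda>x. dg ((Z x)(q := \<theta> x))) \<longlongrightarrow> dg Z0) F"
    by (rule continuous_on_tendsto_compose[OF cont]) auto
  moreover have "\<forall>\<^sub>F x in F. dg ((Z x)(q := \<theta> x)) = (g ((Z x)(q := Z x q + w x)) - g (Z x)) / w x"
    using w0 by eventually_elim (simp add: \<theta>_mvt)
  ultimately show ?thesis by (rule Lim_transform_eventually)
qed

lemma directional_difference_quotient_tendsto:
  fixes g :: "(nat \<Rightarrow> real) \<Rightarrow> real" and dg :: "nat \<Rightarrow> (nat \<Rightarrow> real) \<Rightarrow> real"
    and Z :: "'x \<Rightarrow> nat \<Rightarrow> real"
  assumes "finite S"
    and deriv: "\<And>q z. q \<in> S \<Longrightarrow> ((\<lambda>s. g (z(q := s))) has_real_derivative dg q z) (at (z q))"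
    and cont: "\<And>q. q \<in> S \<Longrightarrow> continuous_on UNIV (dg q)"
    and Z: "(Z \<longlongrightarrow> Z0) F" and w: "(w \<longlongrightarrow> 0) F" and w0: "eventually (\<lambda>x. w x \<noteq> 0) F"
  shows "((\<lambda>x. (g (\<lambda>r. Z x r + w x * (if r \<in> S then d r else 0)) - g (Z x)) / w x)
           \<longlongrightarrow> (\<Sum>q\<in>S. d q * dg q Z0)) F"
  using assms(1) deriv cont
proof (induction S rule: finite_induct)
  case empty thus ?case by simp
next
  case (insert q S)
  define B where "B x = (\<lambda>r. Z x r + w x * (if r \<in> S then d r else 0))" for x
  have "((\<lambda>x. w x * (if r \<in> S then d r else 0)) \<longlongrightarrow> 0) F" for r
    by (simp add: tendsto_mult_left_zero[OF w])
  hence B: "(B \<longlongrightarrow> Z0) F"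
    using Z tendsto_add[where b=0] unfolding B_def tendsto_fun_componentwise by fastforce
  have first: "((\<lambda>x. (g ((B x)(q := B x q + d q * w x)) - g (B x)) / w x) \<longlongrightarrow> d q * dg q Z0) F"
  proof (cases "d q = 0")
    case False
    have "((\<lambda>x. d q * ((g ((B x)(q := B x q + d q * w x)) - g (B x)) / (d q * w x))) \<longlongrightarrow> d q * dg q Z0) F"
      using tendsto_mult_right_zero[OF w, of "d q"] w0 False
      by (intro tendsto_mult tendsto_const partial_difference_quotient_tendsto[where dg="dg q", OF _ _ B]
          insert.prems)
        (auto elim: eventually_mono)
    thus ?thesis using False by simp
  qed simp
  have "(\<lambda>r. Z x r + w x * (if r \<in> insert q S then d r else 0)) = (B x)(q := B x q + d q * w x)" for x
    using insert.hyps(2) by (auto simp: B_def fun_eq_iff)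
  hence "(g (\<lambda>r. Z x r + w x * (if r \<in> insert q S then d r else 0)) - g (Z x)) / w x =
      (g ((B x)(q := B x q + d q * w x)) - g (B x)) / w x + (g (B x) - g (Z x)) / w x" for x
    by (simp add: diff_divide_distrib)
  thus ?case
    using tendsto_add[OF first insert.IH[folded B_def]] insert.prems insert.hyps by simp
qed

lemma has_derivative_directional_quotient:
  fixes f :: "real^'n \<Rightarrow> real^'m"
  assumes "(f has_derivative L) (at \<xi>)"
  shows "((\<lambda>s. (f (\<xi> + s *\<^sub>R v) $ k - f \<xi> $ k) / s) \<longlongrightarrow> L v $ k) (at 0)"
proof -
  have "((\<lambda>s. \<xi> + s *\<^sub>R v) has_derivative (\<lambda>s. s *\<^sub>R v)) (at 0)"
    by (auto intro!: derivative_eq_intros)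
  moreover have "(f has_derivative L) (at (\<xi> + 0 *\<^sub>R v))" using assms by simp
  ultimately have "((\<lambda>s. f (\<xi> + s *\<^sub>R v)) has_derivative (\<lambda>s. L (s *\<^sub>R v))) (at 0)"
    using diff_chain_at by (fastforce simp: o_def)
  hence "((\<lambda>s. f (\<xi> + s *\<^sub>R v) $ k) has_derivative (\<lambda>s. L (s *\<^sub>R v) $ k)) (at 0)"
    by (rule bounded_linear.has_derivative[OF bounded_linear_vec_nth])
  moreover have "(\<lambda>s. L (s *\<^sub>R v) $ k) = (*) (L v $ k)"
    using linear_scale[OF has_derivative_linear[OF assms]] by (auto simp: fun_eq_iff)
  ultimately have "((\<lambda>s. f (\<xi> + s *\<^sub>R v) $ k) has_field_derivative L v $ k) (at 0)"
    by (simp add: has_field_derivative_def)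
  thus ?thesis unfolding has_field_derivative_iff by simp
qed

lemma derivative_component_eq:
  fixes f :: "real^'n \<Rightarrow> real^'m"
  assumes "(f has_derivative L) (at \<xi>)"
    and "\<And>s. f (\<xi> + s *\<^sub>R v) $ k - f \<xi> $ k = f (\<xi> + s *\<^sub>R u) $ l - f \<xi> $ l"
  shows "L v $ k = L u $ l"
proof -
  have "((\<lambda>s. (f (\<xi> + s *\<^sub>R u) $ l - f \<xi> $ l) / s) \<longlongrightarrow> L v $ k) (at 0)"
    using has_derivative_directional_quotient[OF assms(1), of v k] assms(2) by simp
  thus ?thesis
    using tendsto_unique[OF at_neq_bot _ has_derivative_directional_quotient[OF assms(1)]] by blast
qed

lemma increment_le_coordinate_increments:
  fixes f :: "real^'n \<Rightarrow> real^'n"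
  assumes bnd: "\<And>X w k q. dist X X0 < d \<Longrightarrow> \<bar>w\<bar> < d \<Longrightarrow>
      \<bar>f (X + w *\<^sub>R axis q 1) $ k - f X $ k\<bar> \<le> C * \<bar>w\<bar>"
    and path: "\<And>S. dist (\<chi> r. if r \<in> S then Y $ r else X $ r) X0 < d"
    and steps: "\<And>q. \<bar>Y $ q - X $ q\<bar> < d"
  shows "\<bar>f Y $ k - f X $ k\<bar> \<le> C * (\<Sum>q\<in>UNIV. \<bar>Y $ q - X $ q\<bar>)"
proof -
  define Z where "Z S = (\<chi> r. if r \<in> S then Y $ r else X $ r)" for S
  have "\<bar>f (Z S) $ k - f X $ k\<bar> \<le> C * (\<Sum>q\<in>S. \<bar>Y $ q - X $ q\<bar>)" if "finite S" for S k
    using that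
  proof (induction S arbitrary: k rule: finite_induct)
    case empty
    have "Z {} = X" by (simp add: Z_def vec_eq_iff)
    thus ?case by simp
  next
    case (insert q S)
    have "Z (insert q S) = Z S + (Y $ q - X $ q) *\<^sub>R axis q 1"
      using insert.hyps(2) by (auto simp: Z_def vec_eq_iff axis_def)
    hence "\<bar>f (Z (insert q S)) $ k - f (Z S) $ k\<bar> \<le> C * \<bar>Y $ q - X $ q\<bar>"
      using bnd[OF path[folded Z_def] steps] by simp
    moreover have "\<bar>f (Z S) $ k - f X $ k\<bar> \<le> C * (\<Sum>q\<in>S. \<bar>Y $ q - X $ q\<bar>)" by (rule insert.IH)
    ultimately show ?case using insert.hyps by (simp add: distrib_left)
  qed
  from this[of UNIV k] show ?thesis by (simp add: Z_def)
qed

lemma lipschitz_on_cball_if_increments_bounded: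
  fixes f :: "real^'n \<Rightarrow> real^'n"
  assumes d: "d > 0" and C: "C \<ge> 0"
    and bnd: "\<And>X w k q. dist X X0 < d \<Longrightarrow> \<bar>w\<bar> < d \<Longrightarrow>
      \<bar>f (X + w *\<^sub>R axis q 1) $ k - f X $ k\<bar> \<le> C * \<bar>w\<bar>"
  shows "\<exists>\<rho>>0. \<exists>K. K-lipschitz_on (cball X0 \<rho>) f"
proof -
  define N where "N = real CARD('n)"
  have N: "N \<ge> 1" by (simp add: N_def)
  define \<rho> where "\<rho> = d / (4 * N)"
  have \<rho>: "\<rho> > 0" and \<rho>N: "2 * N * \<rho> < d" using d N by (simp_all add: \<rho>_def field_simps)
  have "dist (f X) (f Y) \<le> (N * N * C) * dist X Y" if X: "X \<in> cball X0 \<rho>" and Y: "Y \<in> cball X0 \<rho>" for X Y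
  proof -
    have near: "\<bar>(X - X0) $ r\<bar> \<le> \<rho>" "\<bar>(Y - X0) $ r\<bar> \<le> \<rho>" for r
      using component_le_norm_cart[of "X - X0" r] component_le_norm_cart[of "Y - X0" r] X Y
      by (simp_all add: dist_norm norm_minus_commute)
    have path: "dist (\<chi> r. if r \<in> S then Y $ r else X $ r) X0 < d" for S
    proof -
      have "norm ((\<chi> r. if r \<in> S then Y $ r else X $ r) - X0) \<le> (\<Sum>r\<in>(UNIV::'n set). \<rho>)"
        by (rule order_trans[OF norm_le_l1_cart sum_mono]) (use near in simp)
      also have "\<dots> = N * \<rho>" by (simp add: N_def)
      also have "\<dots> < d" using \<rho>N mult_pos_pos[OF _ \<rho>, of N] N by linarith
      finally show ?thesis by (simp add: dist_norm)
    qed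
    have steps: "\<bar>Y $ q - X $ q\<bar> < d" for q
    proof -
      have "\<bar>Y $ q - X $ q\<bar> \<le> 2 * \<rho>" using near[of q] by simp
      also have "\<dots> \<le> 2 * N * \<rho>" using N \<rho> by simp
      finally show ?thesis using \<rho>N by simp
    qed
    have "\<bar>(f X - f Y) $ k\<bar> \<le> C * (\<Sum>q\<in>UNIV. \<bar>Y $ q - X $ q\<bar>)" for k
      using increment_le_coordinate_increments[OF bnd path steps, of k] by (simp add: abs_minus_commute)
    also have "\<dots> \<le> C * (\<Sum>q\<in>(UNIV::'n set). norm (X - Y))"
      by (intro mult_left_mono sum_mono C)
        (use component_le_norm_cart[of "X - Y"] in \<open>auto simp: abs_minus_commute\<close>)
    also have "\<dots> = N * C * dist X Y" by (simp add: N_def dist_norm)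
    finally have "norm (f X - f Y) \<le> (\<Sum>k\<in>(UNIV::'n set). N * C * dist X Y)"
      by (intro order_trans[OF norm_le_l1_cart] sum_mono)
    thus ?thesis by (simp add: N_def dist_norm)
  qed
  hence "(N * N * C)-lipschitz_on (cball X0 \<rho>) f" using C by (intro lipschitz_onI) auto
  thus ?thesis using \<rho> by blast
qed

section \<open>Vector fields with strict partial derivatives\<close>

text \<open>\<open>D k q X\<close> is the partial derivative of the \<open>k\<close>-th component of \<open>f\<close> in direction \<open>q\<close> at
  \<open>X\<close>, in the strict sense: base point and increment may tend to their limits simultaneously.\<close>
definition has_strict_partials :: "(real^'n \<Rightarrow> real^'n) \<Rightarrow> ('n \<Rightarrow> 'n \<Rightarrow> real^'n \<Rightarrow> real) \<Rightarrow> bool" where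
  "has_strict_partials f D \<longleftrightarrow> (\<forall>k q X0.
     ((\<lambda>(X, w). (f (X + w *\<^sub>R axis q 1) $ k - f X $ k) / w) \<longlongrightarrow> D k q X0)
       (at (X0, 0) within UNIV \<times> (UNIV - {0})))"

lemma has_strict_partialsD:
  assumes "has_strict_partials f D"
    and "(X \<longlongrightarrow> X0) F" and "(w \<longlongrightarrow> 0) F" and "eventually (\<lambda>t. w t \<noteq> 0) F"
  shows "((\<lambda>t. (f (X t + w t *\<^sub>R axis q 1) $ k - f (X t) $ k) / w t) \<longlongrightarrow> D k q X0) F"
proof -
  have "filterlim (\<lambda>t. (X t, w t)) (at (X0, 0) within UNIV \<times> (UNIV - {0})) F"
    using assms(2-4) unfolding filterlim_at by (auto intro: tendsto_Pair elim: eventually_mono)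
  from filterlim_compose[OF assms(1)[unfolded has_strict_partials_def, rule_format] this]
  show ?thesis by simp
qed

lemma has_strict_partials_increments_bounded:
  fixes f :: "real^'n \<Rightarrow> real^'n"
  assumes "has_strict_partials f D"
  shows "\<exists>d>0. \<exists>C\<ge>0. \<forall>X w k q. dist X X0 < d \<longrightarrow> \<bar>w\<bar> < d \<longrightarrow>
     \<bar>f (X + w *\<^sub>R axis q 1) $ k - f X $ k\<bar> \<le> C * \<bar>w\<bar>"
proof -
  define C where "C = (\<Sum>k\<in>UNIV. \<Sum>q\<in>UNIV. \<bar>D k q X0\<bar> + 1)"
  have C_ge: "\<bar>D k q X0\<bar> + 1 \<le> C" for k q
  proof -
    have "\<bar>D k q X0\<bar> + 1 \<le> (\<Sum>q\<in>UNIV. \<bar>D k q X0\<bar> + 1)" by (rule member_le_sum) auto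
    also have "\<dots> \<le> C" unfolding C_def by (rule member_le_sum) (auto intro: sum_nonneg)
    finally show ?thesis .
  qed
  have "eventually (\<lambda>(X, w). \<bar>(f (X + w *\<^sub>R axis q 1) $ k - f X $ k) / w\<bar> \<le> C)
      (at (X0, 0) within UNIV \<times> (UNIV - {0}))" for k q
  proof -
    have "((\<lambda>(X, w). (f (X + w *\<^sub>R axis q 1) $ k - f X $ k) / w) \<longlongrightarrow> D k q X0)
        (at (X0, 0) within UNIV \<times> (UNIV - {0}))"
      using assms unfolding has_strict_partials_def by blast
    from tendstoD[OF this zero_less_one] show ?thesis
      by eventually_elim (use C_ge[of k q] in \<open>auto simp: dist_real_def\<close>)
  qed
  hence "eventually (\<lambda>(X, w). \<forall>k q. \<bar>(f (X + w *\<^sub>R axis q 1) $ k - f X $ k) / w\<bar> \<le> C)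
      (at (X0, 0) within UNIV \<times> (UNIV - {0}))"
    by (simp add: eventually_all_finite case_prod_unfold)
  then obtain d where d: "d > 0" and bound: "\<And>X w k q. w \<noteq> 0 \<Longrightarrow> dist (X, w) (X0, 0) < d \<Longrightarrow>
      \<bar>(f (X + w *\<^sub>R axis q 1) $ k - f X $ k) / w\<bar> \<le> C"
    unfolding eventually_at by auto
  have "\<bar>f (X + w *\<^sub>R axis q 1) $ k - f X $ k\<bar> \<le> C * \<bar>w\<bar>"
    if "dist X X0 < d/2" "\<bar>w\<bar> < d/2" for X w k q
  proof (cases "w = 0")
    case False
    have "dist (X, w) (X0, 0) \<le> dist X X0 + \<bar>w\<bar>"
      unfolding dist_Pair_Pair by (rule order_trans[OF sqrt_sum_squares_le_sum]) auto
    hence "\<bar>f (X + w *\<^sub>R axis q 1) $ k - f X $ k\<bar> / \<bar>w\<bar> \<le> C"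
      using bound[OF False] that by (simp add: abs_divide)
    thus ?thesis using False by (simp add: divide_le_eq mult.commute)
  qed simp
  moreover have "C \<ge> 0" using C_ge[of undefined undefined] by linarith
  ultimately show ?thesis using d by (intro exI[of _ "d/2"] exI[of _ C]) auto
qed

lemma has_strict_partials_locally_lipschitz:
  fixes f :: "real^'n \<Rightarrow> real^'n"
  assumes "has_strict_partials f D"
  shows "\<exists>\<rho>>0. \<exists>K. K-lipschitz_on (cball X0 \<rho>) f"
  using has_strict_partials_increments_bounded[OF assms, of X0]
    lipschitz_on_cball_if_increments_bounded by blast

lemma has_strict_partials_derivative:
  fixes f :: "real^'n \<Rightarrow> real^'n"
  assumes "has_strict_partials f D" and "(f has_derivative L) (at \<xi>)"
  shows "D k q \<xi> = L (axis q 1) $ k"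
proof -
  have "((\<lambda>s. (f (\<xi> + s *\<^sub>R axis q 1) $ k - f \<xi> $ k) / s) \<longlongrightarrow> D k q \<xi>) (at 0)"
    by (rule has_strict_partialsD[OF assms(1) tendsto_const tendsto_ident_at])
      (simp add: eventually_at_filter)
  thus ?thesis
    using tendsto_unique[OF at_neq_bot _ has_derivative_directional_quotient[OF assms(2)]] by blast
qed

lemma has_strict_partials_invariant_tangent:
  fixes f :: "real^'n \<Rightarrow> real^'n"
  assumes "has_strict_partials f D" and "dyn_invariant f X" and "p \<in> X"
    and "X \<subseteq> {x. x $ k = x $ l}"
  shows "f p $ k = f p $ l"
  using has_strict_partials_locally_lipschitz[OF assms(1), of p] invariant_set_tangent assms(2-4)
  by blast

lemma diag_subset_coordinate_eq: "diag \<subseteq> {x. x $ k = x $ l}"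
  by (auto simp: diag_def)

lemma S_set_subset_coordinate_eq: "k \<noteq> q \<Longrightarrow> l \<noteq> q \<Longrightarrow> S_set q \<subseteq> {x. x $ k = x $ l}"
  by (auto simp: S_set_def)

lemma S_set_decompose:
  assumes "z \<in> S_set i" and "m \<noteq> i"
  shows "z = (\<chi> r. z $ m) + (z $ i - z $ m) *\<^sub>R axis i 1"
proof (rule vec_eq_iff[THEN iffD2, rule_format])
  fix r
  have "z $ r = z $ m" if "r \<noteq> i" using assms that unfolding S_set_def by blast
  thus "z $ r = ((\<chi> r. z $ m) + (z $ i - z $ m) *\<^sub>R axis i 1) $ r" by (simp add: axis_def)
qed

lemma S_set_diff_diag_coordinate_neq:
  assumes "z \<in> S_set i - diag" and "m \<noteq> i"
  shows "z $ i \<noteq> z $ m"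
proof
  assume "z $ i = z $ m"
  moreover have "z $ r = z $ m" if "r \<noteq> i" for r using assms that unfolding S_set_def by blast
  ultimately have "z $ r = z $ m" for r by (cases "r = i") simp_all
  hence "z \<in> diag" unfolding diag_def mem_Collect_eq by metis
  thus False using assms(1) by simp
qed

lemma jacobian_preserves_invariant_direction:
  fixes f :: "real^'n \<Rightarrow> real^'n"
  assumes "has_strict_partials f D" and "dyn_invariant f X" and "(f has_derivative L) (at \<xi>)"
    and line: "\<And>s. \<xi> + s *\<^sub>R v \<in> X" and "X \<subseteq> {x. x $ k = x $ l}"
  shows "L v $ k = L v $ l"
proof (rule derivative_component_eq[OF assms(3)])
  fix s
  have "f (\<xi> + s *\<^sub>R v) $ k = f (\<xi> + s *\<^sub>R v) $ l" and "f (\<xi> + 0 *\<^sub>R v) $ k = f (\<xi> + 0 *\<^sub>R v) $ l"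
    using has_strict_partials_invariant_tangent[OF assms(1,2) line assms(5)] by blast+
  thus "f (\<xi> + s *\<^sub>R v) $ k - f \<xi> $ k = f (\<xi> + s *\<^sub>R v) $ l - f \<xi> $ l" by simp
qed

lemma jacobian_diag_direction:
  fixes f :: "real^'n \<Rightarrow> real^'n"
  assumes "has_strict_partials f D" and "dyn_invariant f diag" and "(f has_derivative L) (at \<xi>)"
    and "\<xi> \<in> diag"
  shows "L (\<chi> r. 1) $ k = L (\<chi> r. 1) $ l"
  by (rule jacobian_preserves_invariant_direction[OF assms(1-3) _ diag_subset_coordinate_eq])
    (use assms(4) in \<open>simp add: diag_def\<close>)

lemma jacobian_S_set_direction:
  fixes f :: "real^'n \<Rightarrow> real^'n"
  assumes "has_strict_partials f D" and "dyn_invariant f (S_set q)"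
    and "(f has_derivative L) (at \<xi>)" and "\<xi> \<in> diag" and "k \<noteq> q" and "l \<noteq> q"
  shows "L (axis q 1) $ k = L (axis q 1) $ l"
  by (rule jacobian_preserves_invariant_direction[OF assms(1-3) _ S_set_subset_coordinate_eq[OF assms(5,6)]])
    (use assms(4) in \<open>simp add: diag_def S_set_def axis_def\<close>)

lemma transverse_quotient_tendsto:
  fixes f :: "real^'n \<Rightarrow> real^'n" and z :: "'a \<Rightarrow> real^'n"
  assumes strict: "has_strict_partials f D" and inv: "dyn_invariant f diag"
    and z: "\<And>t. z t \<in> S_set i - diag" and mi: "m \<noteq> i"
    and lim: "(z \<longlongrightarrow> \<xi>) F" and \<xi>: "\<xi> \<in> diag"
  shows "((\<lambda>t. (f (z t) $ i - f (z t) $ m) / (z t $ i - z t $ m)) \<longlongrightarrow> D i i \<xi> - D m i \<xi>) F"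
proof -
  define X :: "'a \<Rightarrow> real^'n" where "X t = (\<chi> r. z t $ m)" for t
  define w where "w t = z t $ i - z t $ m" for t
  have z_eq: "z t = X t + w t *\<^sub>R axis i 1" for t
    using S_set_decompose[of "z t" i m] z mi by (simp add: X_def w_def)
  have X_diag: "f (X t) $ i = f (X t) $ m" for t
    by (rule has_strict_partials_invariant_tangent[OF strict inv _ diag_subset_coordinate_eq])
      (simp add: X_def diag_def)
  have zm: "((\<lambda>t. z t $ m) \<longlongrightarrow> \<xi> $ m) F" and zi: "((\<lambda>t. z t $ i) \<longlongrightarrow> \<xi> $ i) F"
    using lim by (auto intro: tendsto_vec_nth)
  have \<xi>_const: "\<xi> $ r = \<xi> $ m" for r using \<xi> by (simp add: diag_def)
  have X: "(X \<longlongrightarrow> \<xi>) F"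
  proof (rule vec_tendstoI)
    fix r show "((\<lambda>t. X t $ r) \<longlongrightarrow> \<xi> $ r) F" using zm by (simp add: X_def \<xi>_const[of r])
  qed
  have w: "(w \<longlongrightarrow> 0) F"
    using tendsto_diff[OF zi zm] by (simp add: w_def[abs_def] \<xi>_const[of i])
  have w0: "eventually (\<lambda>t. w t \<noteq> 0) F"
    using S_set_diff_diag_coordinate_neq[OF z mi] by (simp add: w_def)
  have "((\<lambda>t. (f (z t) $ i - f (X t) $ i) / w t - (f (z t) $ m - f (X t) $ m) / w t)
      \<longlongrightarrow> D i i \<xi> - D m i \<xi>) F"
    using tendsto_diff[OF has_strict_partialsD[OF strict X w w0, where k=i and q=i]
        has_strict_partialsD[OF strict X w w0, where k=m and q=i]]
    unfolding z_eq[symmetric] .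
  moreover have "(f (z t) $ i - f (X t) $ i) / w t - (f (z t) $ m - f (X t) $ m) / w t =
      (f (z t) $ i - f (z t) $ m) / (z t $ i - z t $ m)" for t
    using X_diag[of t] unfolding w_def by (simp add: diff_divide_distrib)
  ultimately show ?thesis by simp
qed

lemma log_derivative_limit_nonpos_at_top:
  fixes w w' :: "real \<Rightarrow> real"
  assumes der: "\<And>t. (w has_real_derivative w' t) (at t)" and nz: "\<And>t. w t \<noteq> 0"
    and lim0: "(w \<longlongrightarrow> 0) at_top" and lim: "((\<lambda>t. w' t / w t) \<longlongrightarrow> lam) at_top"
  shows "lam \<le> 0"
proof (rule ccontr)
  assume "\<not> lam \<le> 0"
  hence "eventually (\<lambda>t. w' t / w t > 0) at_top" using order_tendstoD(1)[OF lim] by simp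
  then obtain T where T: "\<And>t. t \<ge> T \<Longrightarrow> w' t / w t > 0" unfolding eventually_at_top_linorder by blast
  have grow: "(w T)\<^sup>2 \<le> (w t)\<^sup>2" if "T \<le> t" for t
  proof (rule DERIV_nonneg_imp_nondecreasing[OF that])
    fix x assume "T \<le> x" "x \<le> t"
    hence "2 * w x * w' x \<ge> 0" using T[of x] by (simp add: zero_less_divide_iff zero_le_mult_iff) (smt (verit))
    moreover have "DERIV (\<lambda>t. (w t)\<^sup>2) x :> 2 * w x * w' x"
      using der[of x] by (auto intro!: derivative_eq_intros)
    ultimately show "\<exists>y. DERIV (\<lambda>t. (w t)\<^sup>2) x :> y \<and> y \<ge> 0" by blast
  qed
  have "((\<lambda>t. (w t)\<^sup>2) \<longlongrightarrow> 0) at_top" using tendsto_power[OF lim0, of 2] by simp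
  moreover have "(w T)\<^sup>2 > 0" using nz[of T] by simp
  ultimately obtain T' where T': "\<And>t. t \<ge> T' \<Longrightarrow> (w t)\<^sup>2 < (w T)\<^sup>2"
    using order_tendstoD(2) eventually_at_top_linorder by metis
  have "(w (max T T'))\<^sup>2 < (w T)\<^sup>2" by (rule T') simp
  moreover have "(w T)\<^sup>2 \<le> (w (max T T'))\<^sup>2" by (rule grow) simp
  ultimately show False by simp
qed

lemma log_derivative_limit_nonneg_at_bot:
  fixes w w' :: "real \<Rightarrow> real"
  assumes der: "\<And>t. (w has_real_derivative w' t) (at t)" and nz: "\<And>t. w t \<noteq> 0"
    and lim0: "(w \<longlongrightarrow> 0) at_bot" and lim: "((\<lambda>t. w' t / w t) \<longlongrightarrow> lam) at_bot"
  shows "lam \<ge> 0"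
proof -
  have der': "((\<lambda>t. w (- t)) has_real_derivative - w' (- t)) (at t)" for t
    using DERIV_chain2[OF der DERIV_minus[OF DERIV_ident]] by simp
  have lim': "((\<lambda>t. - w' (- t) / w (- t)) \<longlongrightarrow> - lam) at_top"
    using tendsto_minus[OF lim[unfolded filterlim_at_bot_mirror]] by simp
  have "- lam \<le> 0"
    by (rule log_derivative_limit_nonpos_at_top[OF der' nz lim0[unfolded filterlim_at_bot_mirror] lim'])
  thus ?thesis by simp
qed

lemma coordinate_difference_has_derivative:
  fixes z :: "real \<Rightarrow> real^'n"
  assumes "(z has_vector_derivative v) (at t)"
  shows "((\<lambda>t. z t $ k - z t $ l) has_real_derivative v $ k - v $ l) (at t)"
proof -
  have "((\<lambda>t. z t $ k - z t $ l) has_vector_derivative v $ k - v $ l) (at t)"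
    using assms
    by (intro has_vector_derivative_diff bounded_linear.has_vector_derivative[OF bounded_linear_vec_nth])
  thus ?thesis by (simp add: has_real_derivative_iff_has_vector_derivative)
qed

lemma transverse_rate_at_source:
  fixes f :: "real^'n \<Rightarrow> real^'n"
  assumes strict: "has_strict_partials f D" and inv: "dyn_invariant f diag"
    and L: "(f has_derivative L) (at \<xi>)" and \<xi>: "\<xi> \<in> diag"
    and het: "heteroclinic f \<xi> \<xi>' z" and z: "\<And>t. z t \<in> S_set i - diag" and mi: "m \<noteq> i"
  shows "L (axis i 1) $ m \<le> L (axis i 1) $ i"
proof -
  have lim: "(z \<longlongrightarrow> \<xi>) at_bot" using het by (simp add: heteroclinic_def)
  have "((\<lambda>t. z t $ i - z t $ m) \<longlongrightarrow> \<xi> $ i - \<xi> $ m) at_bot"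
    using lim by (intro tendsto_diff tendsto_vec_nth)
  moreover have "\<xi> $ i = \<xi> $ m" using \<xi> by (simp add: diag_def)
  ultimately have w0: "((\<lambda>t. z t $ i - z t $ m) \<longlongrightarrow> 0) at_bot" by simp
  have der: "((\<lambda>t. z t $ i - z t $ m) has_real_derivative f (z t) $ i - f (z t) $ m) (at t)" for t
    using het coordinate_difference_has_derivative unfolding heteroclinic_def by blast
  have nz: "z t $ i - z t $ m \<noteq> 0" for t using S_set_diff_diag_coordinate_neq[OF z mi] by simp
  have "D i i \<xi> - D m i \<xi> \<ge> 0"
    by (rule log_derivative_limit_nonneg_at_bot[OF der nz w0 transverse_quotient_tendsto[OF strict inv z mi lim \<xi>]])
  thus ?thesis using has_strict_partials_derivative[OF strict L] by simp
qed

lemma transverse_rate_at_sink: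
  fixes f :: "real^'n \<Rightarrow> real^'n"
  assumes strict: "has_strict_partials f D" and inv: "dyn_invariant f diag"
    and L: "(f has_derivative L) (at \<xi>)" and \<xi>: "\<xi> \<in> diag"
    and het: "heteroclinic f \<xi>' \<xi> z" and z: "\<And>t. z t \<in> S_set i - diag" and mi: "m \<noteq> i"
  shows "L (axis i 1) $ i \<le> L (axis i 1) $ m"
proof -
  have lim: "(z \<longlongrightarrow> \<xi>) at_top" using het by (simp add: heteroclinic_def)
  have "((\<lambda>t. z t $ i - z t $ m) \<longlongrightarrow> \<xi> $ i - \<xi> $ m) at_top"
    using lim by (intro tendsto_diff tendsto_vec_nth)
  moreover have "\<xi> $ i = \<xi> $ m" using \<xi> by (simp add: diag_def)
  ultimately have w0: "((\<lambda>t. z t $ i - z t $ m) \<longlongrightarrow> 0) at_top" by simp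
  have der: "((\<lambda>t. z t $ i - z t $ m) has_real_derivative f (z t) $ i - f (z t) $ m) (at t)" for t
    using het coordinate_difference_has_derivative unfolding heteroclinic_def by blast
  have nz: "z t $ i - z t $ m \<noteq> 0" for t using S_set_diff_diag_coordinate_neq[OF z mi] by simp
  have "D i i \<xi> - D m i \<xi> \<le> 0"
    by (rule log_derivative_limit_nonpos_at_top[OF der nz w0 transverse_quotient_tendsto[OF strict inv z mi lim \<xi>]])
  thus ?thesis using has_strict_partials_derivative[OF strict L] by simp
qed

section \<open>The network vector field\<close>

lemma smooth_in_partial_derivative:
  assumes "smooth_in k g" and "i < k"
  shows "\<exists>dg. (\<forall>z. ((\<lambda>s. g (z(i := s))) has_real_derivative dg z) (at (z i))) \<and> continuous_on UNIV dg"
  using assms by (elim smooth_in.cases) (blast elim: smooth_in.cases)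

lemma coupling_arg_add:
  fixes X v :: "real^'n::{finite,linorder}"
  shows "coupling_arg (X + w *\<^sub>R v) k A =
     (\<lambda>r. coupling_arg X k A r + w * (if r \<in> {..card A} then coupling_arg v k A r else 0))"
  by (auto simp: fun_eq_iff coupling_arg_def)

lemma coupling_arg_continuous:
  "continuous_on UNIV (\<lambda>X :: real^'n::{finite,linorder}. coupling_arg X k A)"
proof (rule continuous_on_coordinatewise_then_product)
  fix r
  show "continuous_on UNIV (\<lambda>X. coupling_arg X k A r)"
    unfolding coupling_arg_def by (cases "r = 0"; cases "r \<le> card A") (auto intro!: continuous_intros)
qed

lemma network_field_difference_quotient_tendsto:
  fixes E :: "'n::{finite,linorder} set set" and X :: "'x \<Rightarrow> real^('n::{finite,linorder})"
    and dF :: "(nat \<Rightarrow> real) \<Rightarrow> real" and dG :: "'n set \<Rightarrow> nat \<Rightarrow> (nat \<Rightarrow> real) \<Rightarrow> real"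
  assumes dF: "\<And>z. ((\<lambda>s. F ((z(0 := s)) 0)) has_real_derivative dF z) (at (z 0))"
    and dF_cont: "continuous_on UNIV dF"
    and dG: "\<And>A r z. A \<in> E \<Longrightarrow> r \<le> card A \<Longrightarrow>
        ((\<lambda>s. G (card A + 1) (z(r := s))) has_real_derivative dG A r z) (at (z r))"
    and dG_cont: "\<And>A r. A \<in> E \<Longrightarrow> r \<le> card A \<Longrightarrow> continuous_on UNIV (dG A r)"
    and X: "(X \<longlongrightarrow> X0) Fl" and w: "(w \<longlongrightarrow> 0) Fl" and w0: "eventually (\<lambda>x. w x \<noteq> 0) Fl"
  shows "((\<lambda>x. (network_field E F G (X x + w x *\<^sub>R axis q 1) $ k - network_field E F G (X x) $ k) / w x)
     \<longlongrightarrow> axis q 1 $ k * dF (\<lambda>_. X0 $ k) + (\<Sum>A\<in>{A\<in>E. k \<in> A}. \<Sum>r\<in>{..card A}.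
           coupling_arg (axis q 1) k A r * dG A r (coupling_arg X0 k A))) Fl"
proof -
  have X_k: "((\<lambda>x r. X x $ k) \<longlongrightarrow> (\<lambda>r. X0 $ k)) Fl"
    using X unfolding tendsto_fun_componentwise by (auto intro: tendsto_vec_nth)
  have F_part: "((\<lambda>x. (F (X x $ k + w x * axis q 1 $ k) - F (X x $ k)) / w x)
      \<longlongrightarrow> axis q 1 $ k * dF (\<lambda>_. X0 $ k)) Fl"
    using directional_difference_quotient_tendsto[where S="{0}" and g="\<lambda>z. F (z 0)" and dg="\<lambda>_. dF"
        and d="\<lambda>_. axis q 1 $ k", OF _ _ _ X_k w w0] dF dF_cont by simp
  have G_part: "((\<lambda>x. (G (card A + 1) (coupling_arg (X x + w x *\<^sub>R axis q 1) k A)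
       - G (card A + 1) (coupling_arg (X x) k A)) / w x)
     \<longlongrightarrow> (\<Sum>r\<in>{..card A}. coupling_arg (axis q 1) k A r * dG A r (coupling_arg X0 k A))) Fl"
    if A: "A \<in> E" for A
    unfolding coupling_arg_add
    by (rule directional_difference_quotient_tendsto[OF _ _ _ _ w w0])
      (auto intro: dG[simplified] dG_cont A continuous_on_tendsto_compose[OF coupling_arg_continuous X]
        simp del: fun_upd_apply)
  have split: "(network_field E F G (X x + w x *\<^sub>R axis q 1) $ k - network_field E F G (X x) $ k) / w x =
      (F (X x $ k + w x * axis q 1 $ k) - F (X x $ k)) / w x +
      (\<Sum>A\<in>{A\<in>E. k \<in> A}. (G (card A + 1) (coupling_arg (X x + w x *\<^sub>R axis q 1) k A)
         - G (card A + 1) (coupling_arg (X x) k A)) / w x)" for x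
    by (simp add: network_field_def sum_subtractf sum_divide_distrib[symmetric] add_divide_distrib
        diff_divide_distrib del: of_nat_Suc)
  show ?thesis
    unfolding split by (intro tendsto_add[OF F_part] tendsto_sum) (use G_part in auto)
qed

lemma network_field_has_strict_partials:
  fixes E :: "'n::{finite,linorder} set set"
  assumes "smooth_real_fun F" and "\<forall>A\<in>E. admissible_coupling (card A + 1) (G (card A + 1))"
  shows "\<exists>D. has_strict_partials (network_field E F G) D"
proof -
  obtain dF :: "(nat \<Rightarrow> real) \<Rightarrow> real" where dF: "\<And>z. ((\<lambda>s. F ((z(0 := s)) 0)) has_real_derivative dF z) (at (z 0))"
    and dF_cont: "continuous_on UNIV dF"
    using smooth_in_partial_derivative[OF assms(1)[unfolded smooth_real_fun_def] zero_less_one]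
    by blast
  have "\<exists>dg. A \<in> E \<longrightarrow> r \<le> card A \<longrightarrow>
     (\<forall>z. ((\<lambda>s. G (card A + 1) (z(r := s))) has_real_derivative dg z) (at (z r))) \<and> continuous_on UNIV dg"
    for A r
    using assms(2) smooth_in_partial_derivative[of "card A + 1" "G (card A + 1)" r]
    by (auto simp: admissible_coupling_def)
  then obtain dG :: "'n set \<Rightarrow> nat \<Rightarrow> (nat \<Rightarrow> real) \<Rightarrow> real" where dG: "\<And>A r z. A \<in> E \<Longrightarrow> r \<le> card A \<Longrightarrow>
        ((\<lambda>s. G (card A + 1) (z(r := s))) has_real_derivative dG A r z) (at (z r))"
    and dG_cont: "\<And>A r. A \<in> E \<Longrightarrow> r \<le> card A \<Longrightarrow> continuous_on UNIV (dG A r)"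
    by metis
  let ?within = "\<lambda>X0. at (X0, 0) within UNIV \<times> (UNIV - {0::real})"
  have "(fst \<longlongrightarrow> X0) (?within X0)" and "(snd \<longlongrightarrow> 0) (?within X0)" for X0 :: "real^('n::{finite,linorder})"
    using tendsto_fst[OF tendsto_ident_at, of "(X0, 0)"] tendsto_snd[OF tendsto_ident_at, of "(X0, 0)"]
    by simp_all
  moreover have "eventually (\<lambda>x. snd x \<noteq> 0) (?within X0)" for X0 :: "real^('n::{finite,linorder})"
    unfolding eventually_at_filter by (auto intro: always_eventually)
  ultimately have "has_strict_partials (network_field E F G) (\<lambda>k q X0. axis q 1 $ k * dF (\<lambda>_. X0 $ k) +
     (\<Sum>A\<in>{A\<in>E. k \<in> A}. \<Sum>r\<in>{..card A}. coupling_arg (axis q 1) k A r * dG A r (coupling_arg X0 k A)))"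
    unfolding has_strict_partials_def split_beta'
    by (blast intro: network_field_difference_quotient_tendsto[where F=F and G=G and E=E, OF dF dF_cont dG dG_cont])
  thus ?thesis by blast
qed

definition perturbed_arg :: "nat \<Rightarrow> real \<Rightarrow> real \<Rightarrow> nat \<Rightarrow> real" where
  "perturbed_arg n c s = (\<lambda>r. if r = 0 then c else if r \<le> n then (if r = 1 then c + s else c) else 0)"

text \<open>By symmetry of the coupling function, a node sees a single perturbed neighbour the same way,
  whatever its position in the hyperedge.\<close>
lemma coupling_arg_perturbed:
  fixes A :: "'n::{finite,linorder} set"
  assumes adm: "admissible_coupling (card A + 1) g" and kl: "k \<noteq> l"
  shows "g (coupling_arg ((\<chi> r. c) + s *\<^sub>R axis l 1) k A) = g (perturbed_arg (card A) c (if l \<in> A then s else 0))"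
proof (cases "l \<in> A")
  case False
  have "sorted_list_of_set A ! (r - 1) \<noteq> l" if "1 \<le> r" "r \<le> card A" for r
    using False nth_mem[of "r - 1" "sorted_list_of_set A"] that by auto
  hence "coupling_arg ((\<chi> r. c) + s *\<^sub>R axis l 1) k A = perturbed_arg (card A) c 0"
    using kl by (auto simp: fun_eq_iff coupling_arg_def perturbed_arg_def axis_def)
  thus ?thesis using False by simp
next
  case True
  define xs where "xs = sorted_list_of_set A"
  have "distinct xs" and len: "length xs = card A" and "set xs = A" by (auto simp: xs_def)
  then obtain p where p: "p < card A" "xs ! p = l" using True by (metis in_set_conv_nth)
  have nth_l: "xs ! (r - 1) = l \<longleftrightarrow> r = Suc p" if "1 \<le> r" "r \<le> card A" for r
    using nth_eq_iff_index_eq[of xs "r - 1" p] \<open>distinct xs\<close> that p len by auto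
  define \<tau> where "\<tau> = Transposition.transpose 1 (Suc p)"
  have \<tau>: "\<tau> permutes {1..<card A + 1}" using p by (auto simp: \<tau>_def intro!: permutes_swap_id)
  have "coupling_arg ((\<chi> r. c) + s *\<^sub>R axis l 1) k A = perturbed_arg (card A) c s \<circ> \<tau>"
  proof
    fix r
    consider "r = 0" | "1 \<le> r \<and> r \<le> card A" | "r > card A" by linarith
    thus "coupling_arg ((\<chi> r. c) + s *\<^sub>R axis l 1) k A r = (perturbed_arg (card A) c s \<circ> \<tau>) r"
    proof cases
      case 2
      have "1 \<le> \<tau> r \<and> \<tau> r \<le> card A" and "\<tau> r = 1 \<longleftrightarrow> r = Suc p"
        using 2 p by (auto simp: \<tau>_def Transposition.transpose_def)
      thus ?thesis using 2 nth_l[of r] by (auto simp: coupling_arg_def perturbed_arg_def axis_def xs_def[symmetric])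
    qed (use p kl in \<open>auto simp: coupling_arg_def perturbed_arg_def axis_def \<tau>_def Transposition.transpose_def\<close>)
  qed
  moreover have "g (perturbed_arg (card A) c s \<circ> \<tau>) = g (perturbed_arg (card A) c s)"
    using adm \<tau> unfolding admissible_coupling_def by blast
  ultimately show ?thesis using True by simp
qed

lemma network_field_perturbed:
  fixes E :: "'n::{finite,linorder} set set"
  assumes "\<forall>A\<in>E. admissible_coupling (card A + 1) (G (card A + 1))" and "k \<noteq> l"
  shows "network_field E F G ((\<chi> r. c) + s *\<^sub>R axis l 1) $ k = F c +
     (\<Sum>A\<in>{A\<in>E. k \<in> A}. G (card A + 1) (perturbed_arg (card A) c (if l \<in> A then s else 0)))"
proof -
  have "((\<chi> r. c) + s *\<^sub>R axis l 1) $ k = c" using assms(2) by (simp add: axis_def)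
  moreover have "G (card A + 1) (coupling_arg ((\<chi> r. c) + s *\<^sub>R axis l 1) k A) =
      G (card A + 1) (perturbed_arg (card A) c (if l \<in> A then s else 0))" if "A \<in> E" for A
    using coupling_arg_perturbed[OF _ assms(2)] assms(1) that by blast
  ultimately show ?thesis unfolding network_field_def by (auto intro: sum.cong)
qed

lemma network_field_perturbation_effect:
  fixes E :: "'n::{finite,linorder} set set"
  assumes adm: "\<forall>A\<in>E. admissible_coupling (card A + 1) (G (card A + 1))" and kl: "k \<noteq> l"
  shows "network_field E F G ((\<chi> r. c) + s *\<^sub>R axis l 1) $ k - network_field E F G (\<chi> r. c) $ k =
    (\<Sum>A\<in>{A\<in>E. k \<in> A \<and> l \<in> A}.
       G (card A + 1) (perturbed_arg (card A) c s) - G (card A + 1) (perturbed_arg (card A) c 0))"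
proof -
  have "network_field E F G ((\<chi> r. c) + s *\<^sub>R axis l 1) $ k - network_field E F G (\<chi> r. c) $ k =
      (\<Sum>A\<in>{A\<in>E. k \<in> A}. G (card A + 1) (perturbed_arg (card A) c (if l \<in> A then s else 0))
         - G (card A + 1) (perturbed_arg (card A) c 0))"
    using network_field_perturbed[OF adm kl, of F c s] network_field_perturbed[OF adm kl, of F c 0]
    by (simp add: sum_subtractf)
  also have "\<dots> = (\<Sum>A\<in>{A\<in>E. k \<in> A}. if l \<in> A then
      G (card A + 1) (perturbed_arg (card A) c s) - G (card A + 1) (perturbed_arg (card A) c 0) else 0)"
    by (rule sum.cong) auto
  also have "\<dots> = (\<Sum>A\<in>{A\<in>E. k \<in> A \<and> l \<in> A}.
      G (card A + 1) (perturbed_arg (card A) c s) - G (card A + 1) (perturbed_arg (card A) c 0))"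
    by (simp add: sum.inter_filter[symmetric] conj_assoc)
  finally show ?thesis .
qed

lemma network_field_jacobian_symmetric:
  fixes E :: "'n::{finite,linorder} set set"
  assumes "\<forall>A\<in>E. admissible_coupling (card A + 1) (G (card A + 1))"
    and "(network_field E F G has_derivative L) (at \<xi>)" and "\<xi> \<in> diag" and "k \<noteq> l"
  shows "L (axis l 1) $ k = L (axis k 1) $ l"
proof (rule derivative_component_eq[OF assms(2)])
  fix s
  define c where "c = \<xi> $ k"
  have \<xi>: "\<xi> = (\<chi> r. c)" using assms(3) by (auto simp: diag_def vec_eq_iff c_def)
  have "{A\<in>E. k \<in> A \<and> l \<in> A} = {A\<in>E. l \<in> A \<and> k \<in> A}" by blast
  thus "network_field E F G (\<xi> + s *\<^sub>R axis l 1) $ k - network_field E F G \<xi> $ k =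
      network_field E F G (\<xi> + s *\<^sub>R axis k 1) $ l - network_field E F G \<xi> $ l"
    unfolding \<xi> network_field_perturbation_effect[OF assms(1,4)]
      network_field_perturbation_effect[OF assms(1) assms(4)[symmetric]] by simp
qed

section \<open>The Jacobian at a diagonal equilibrium of a field cycle\<close>

lemma linear_ones_component:
  fixes L :: "real^'n \<Rightarrow> real^'m"
  assumes "linear L"
  shows "L (\<chi> r. 1) $ k = (\<Sum>q\<in>UNIV. L (axis q 1) $ k)"
proof -
  have ones: "(\<chi> r. 1) = (\<Sum>q\<in>UNIV. axis q (1::real))" by (simp add: vec_eq_iff axis_def)
  have "L (\<chi> r. 1) = (\<Sum>q\<in>UNIV. L (axis q 1))" unfolding ones by (rule linear_sum[OF assms])
  thus ?thesis by (simp add: sum_component)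
qed

lemma sum_offdiagonal_constant:
  fixes a :: "'n::finite \<Rightarrow> real"
  assumes "\<And>q. q \<noteq> i \<Longrightarrow> a q = \<mu>"
  shows "(\<Sum>q\<in>UNIV. a q) = a i - \<mu> + real CARD('n) * \<mu>"
proof -
  have "(\<Sum>q\<in>UNIV. a q) = (\<Sum>q\<in>UNIV. \<mu> + (if q = i then a i - \<mu> else 0))"
    using assms by (intro sum.cong) auto
  thus ?thesis by (simp add: sum.distrib)
qed

lemma linear_kernel_nontrivial:
  fixes L :: "real^'n \<Rightarrow> real^'n"
  assumes lin: "linear L" and "m \<noteq> i"
    and col: "L (axis i 1) = \<mu> *\<^sub>R (\<chi> r. 1)" and diag: "L (\<chi> r. 1) = \<kappa> *\<^sub>R (\<chi> r. 1)"
  shows "\<exists>v. v \<noteq> 0 \<and> L v = 0"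
proof (cases "\<kappa> = 0")
  case True
  thus ?thesis using diag by (intro exI[of _ "\<chi> r. 1"]) (simp add: vec_eq_iff)
next
  case False
  define v :: "real^'n" where "v = axis i 1 - (\<mu> / \<kappa>) *\<^sub>R (\<chi> r. 1)"
  have "L v = 0" using False by (simp add: v_def linear_diff[OF lin] linear_scale[OF lin] col diag)
  moreover have "v $ i - v $ m = 1" using \<open>m \<noteq> i\<close> by (simp add: v_def axis_def)
  ultimately show ?thesis by (metis cancel_comm_monoid_add_class.diff_cancel zero_index zero_neq_one)
qed

lemma linear_kernel_zero_eigenvalue:
  fixes L :: "real^'n \<Rightarrow> real^'n"
  assumes "linear L" and "v \<noteq> 0" and "L v = 0"
  shows "is_eigenvalue (complexify (matrix L)) 0"
proof -
  define cv :: "complex^'n" where "cv = (\<chi> k. complex_of_real (v $ k))"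
  have "cv \<noteq> 0" using assms(2) by (auto simp: cv_def vec_eq_iff)
  moreover have "(complexify (matrix L) *v cv) $ k = complex_of_real ((matrix L *v v) $ k)" for k
    by (simp add: complexify_def cv_def matrix_vector_mult_def)
  hence "complexify (matrix L) *v cv = 0 *s cv"
    using matrix_works[OF assms(1)[folded linear_matrix_vector_mul_eq]] assms(3) by (simp add: vec_eq_iff)
  ultimately show ?thesis unfolding is_eigenvalue_def by blast
qed

lemma field_cycle_jacobian_singular:
  fixes L :: "real^'n \<Rightarrow> real^'n"
  assumes lin: "linear L" and ij: "i \<noteq> j" and mi: "m \<noteq> i" and mj: "m \<noteq> j"
    and sym: "\<And>k l. k \<noteq> l \<Longrightarrow> L (axis l 1) $ k = L (axis k 1) $ l"
    and diag: "\<And>k. L (\<chi> r. 1) $ k = L (\<chi> r. 1) $ m"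
    and col_i: "\<And>k. k \<noteq> i \<Longrightarrow> L (axis i 1) $ k = L (axis i 1) $ m"
    and col_j: "\<And>k. k \<noteq> j \<Longrightarrow> L (axis j 1) $ k = L (axis j 1) $ m"
    and rate_i: "L (axis i 1) $ m \<le> L (axis i 1) $ i"
    and rate_j: "L (axis j 1) $ j \<le> L (axis j 1) $ m"
  shows "\<exists>v. v \<noteq> 0 \<and> L v = 0"
proof -
  define J where "J k q = L (axis q 1) $ k" for k q
  have row_i: "J i q = J m i" if "q \<noteq> i" for q using sym[OF that[symmetric]] col_i[OF that] by (simp add: J_def)
  have row_j: "J j q = J m j" if "q \<noteq> j" for q using sym[OF that[symmetric]] col_j[OF that] by (simp add: J_def)
  have "J m i = J m j" using row_i[of j] row_j[of i] sym[OF ij] ij by (simp add: J_def)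
  moreover have "(\<Sum>q\<in>UNIV. J i q) = (\<Sum>q\<in>UNIV. J j q)"
    using diag[of i] diag[of j] linear_ones_component[OF lin] by (simp add: J_def)
  ultimately have "J i i - J m i = J j j - J m j"
    using sum_offdiagonal_constant[of i "J i", OF row_i] sum_offdiagonal_constant[of j "J j", OF row_j] by simp
  hence "J i i = J m i" using rate_i rate_j by (simp add: J_def)
  hence "L (axis i 1) $ k = J m i" for k using col_i[of k] by (cases "k = i") (simp_all add: J_def)
  hence "L (axis i 1) = J m i *\<^sub>R (\<chi> r. 1)" by (simp add: vec_eq_iff)
  moreover have "L (\<chi> r. 1) = L (\<chi> r. 1) $ m *\<^sub>R (\<chi> r. 1)"
  proof (rule vec_eq_iff[THEN iffD2, rule_format])
    fix k show "L (\<chi> r. 1) $ k = (L (\<chi> r. 1) $ m *\<^sub>R (\<chi> r. 1 :: real^'n)) $ k" using diag[of k] by simp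
  qed
  ultimately show ?thesis by (rule linear_kernel_nontrivial[OF lin mi])
qed

lemma exists_third_element:
  assumes "CARD('n) \<ge> 3"
  obtains m :: 'n where "m \<noteq> i" and "m \<noteq> j"
proof -
  have "card {i, j} < CARD('n)" using assms by (simp add: card_insert_if)
  hence "{i, j} \<noteq> UNIV" by auto
  thus ?thesis using that by blast
qed

theorem mainTheorem13:
  fixes E :: "'n::{finite,linorder} set set"
    and F :: "real \<Rightarrow> real"
    and G :: "nat \<Rightarrow> (nat \<Rightarrow> real) \<Rightarrow> real"
  assumes "CARD('n) \<ge> 3"
    and "\<forall>A\<in>E. A \<noteq> {}"
    and "smooth_real_fun F"
    and "\<forall>A\<in>E. admissible_coupling (card A + 1) (G (card A + 1))"
  shows "\<not> realizes_field_cycle (network_field E F G)"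
proof
  let ?f = "network_field E F G"
  assume "realizes_field_cycle ?f"
  then obtain i j \<xi> \<xi>' x y where ij: "i \<noteq> j" and inv: "dyn_invariant ?f diag"
    and inv_i: "dyn_invariant ?f (S_set i)" and inv_j: "dyn_invariant ?f (S_set j)"
    and \<xi>: "\<xi> \<in> diag" and hyp: "hyperbolic_equilibrium ?f \<xi>"
    and x: "heteroclinic ?f \<xi> \<xi>' x" "\<And>t. x t \<in> S_set i - diag"
    and y: "heteroclinic ?f \<xi>' \<xi> y" "\<And>t. y t \<in> S_set j - diag"
    unfolding realizes_field_cycle_def by blast
  obtain D where D: "has_strict_partials ?f D"
    using network_field_has_strict_partials[OF assms(3,4)] by blast
  obtain m where mi: "m \<noteq> i" and mj: "m \<noteq> j" using exists_third_element[OF assms(1)] .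
  from hyp obtain L where L: "(?f has_derivative L) (at \<xi>)"
    and eig: "\<And>c. is_eigenvalue (complexify (matrix L)) c \<Longrightarrow> Re c \<noteq> 0"
    unfolding hyperbolic_equilibrium_def by blast
  have lin: "linear L" using L by (rule has_derivative_linear)
  have "\<exists>v. v \<noteq> 0 \<and> L v = 0"
    by (rule field_cycle_jacobian_singular[OF lin ij mi mj
        network_field_jacobian_symmetric[OF assms(4) L \<xi>]
        jacobian_diag_direction[OF D inv L \<xi>]
        jacobian_S_set_direction[OF D inv_i L \<xi> _ mi] jacobian_S_set_direction[OF D inv_j L \<xi> _ mj]
        transverse_rate_at_source[OF D inv L \<xi> x mi] transverse_rate_at_sink[OF D inv L \<xi> y mj]])
  then obtain v where "v \<noteq> 0" and "L v = 0" by blast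
  thus False using eig[OF linear_kernel_zero_eigenvalue[OF lin]] by simp
qed

end
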